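(* (i) For all $x\in[-0.5,0.5]$, $|E_4(x+0.65i)|<5.9$. (ii) For all $x\in[-0.5,0.5]$, $|E_4(x+0.75i)|<3.45$.
   Context: $q=e^{2\pi i\tau}$ for $\tau$ in the upper half plane, and $E_4(\tau)=1+240\sum_{n\ge1}\sigma_3(n)q^n$ with $\sigma_3(n)=\sum_{d\mid n}d^3$. *)

theory Defs
  imports "HOL-Analysis.Analysis"
begin

definition sigma3 :: "nat \<Rightarrow> nat" where
  "sigma3 n = (\<Sum>d | d dvd n. d ^ 3)"

definition qnome :: "complex \<Rightarrow> complex" where
  "qnome \<tau> = exp (2 * of_real pi * \<i> * \<tau>)"

definition E4 :: "complex \<Rightarrow> complex" where
  "E4 \<tau> = 1 + 240 * (\<Sum>n. of_nat (sigma3 (Suc n)) * qnome \<tau> ^ Suc n)"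

end

theory Submission
  imports Defs "HOL-Analysis.Analysis"
begin

text \<open>With \<open>r = |q| = exp (-2 \<pi> Im \<tau>)\<close>, the triangle inequality gives
  \<open>|E4 \<tau>| \<le> 1 + 240 \<Sum> \<sigma>\<^sub>3(n) r\<^sup>n\<close>. The first two terms are computed exactly
  (\<open>\<sigma>\<^sub>3(1) = 1\<close>, \<open>\<sigma>\<^sub>3(2) = 9\<close>); for the tail the crude estimate
  \<open>\<sigma>\<^sub>3(n) \<le> n\<^sup>4 \<le> 4 \<cdot> 3\<^sup>n\<close> reduces the sum to a geometric series in \<open>3 r\<close>.
  For \<open>Im \<tau> = 0.65\<close> and \<open>0.75\<close> one has \<open>r \<le> 1/59\<close> and \<open>r \<le> 1/111\<close>, which is
  small enough, as a truncated Taylor series of \<open>exp\<close> certifies.\<close>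

lemma sigma3_1: "sigma3 1 = 1"
  by (simp add: sigma3_def)

lemma sigma3_2: "sigma3 2 = 9"
proof -
  have "{d::nat. d dvd 2} = {1, 2}"
    using dvd_imp_le[of _ 2] by (fastforce simp: le_Suc_eq numeral_2_eq_2)
  then show ?thesis by (simp add: sigma3_def)
qed

lemma sigma3_le_pow4: "sigma3 n \<le> n ^ 4"
proof (cases "n = 0")
  case True
  then show ?thesis by (simp add: sigma3_def)
next
  case False
  then have divisors: "{d. d dvd n} \<subseteq> {1..n}"
    by (auto dest: dvd_imp_le)
  have "sigma3 n \<le> (\<Sum>d\<in>{1..n}. d ^ 3)"
    unfolding sigma3_def using divisors by (intro sum_mono2) auto
  also have "\<dots> \<le> (\<Sum>d\<in>{1..n}. n ^ 3)"
    by (intro sum_mono power_mono) auto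
  also have "\<dots> = n ^ 4"
    by (simp add: power_eq_if)
  finally show ?thesis .
qed

lemma pow4_le_4_mult_pow3: "n ^ 4 \<le> 4 * 3 ^ n" for n :: nat
proof (cases "n < 4")
  case True
  then consider "n = 0" | "n = 1" | "n = 2" | "n = 3" by linarith
  then show ?thesis by cases simp_all
next
  case False
  then have "4 \<le> n" by simp
  then show ?thesis
  proof (induction n rule: dec_induct)
    case (step m)
    have "(4 * Suc m) ^ 4 \<le> (5 * m) ^ 4"
      using step.hyps by (intro power_mono) auto
    then have "Suc m ^ 4 \<le> 3 * m ^ 4"
      by (simp only: power_mult_distrib) simp
    with step.IH show ?case by simp
  qed simp
qed

lemma sigma3_le_4_mult_pow3: "real (sigma3 n) \<le> 4 * 3 ^ n"
proof -
  have "sigma3 n \<le> 4 * 3 ^ n"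
    using sigma3_le_pow4 pow4_le_4_mult_pow3 by (rule order_trans)
  then have "real (sigma3 n) \<le> real (4 * 3 ^ n)"
    by (rule of_nat_mono)
  then show ?thesis
    by simp
qed

lemma sigma3_term_le_geometric:
  fixes r :: real
  assumes "0 \<le> r"
  shows "real (sigma3 n) * r ^ n \<le> 4 * (3 * r) ^ n"
proof -
  have "real (sigma3 n) * r ^ n \<le> 4 * 3 ^ n * r ^ n"
    using assms by (intro mult_right_mono sigma3_le_4_mult_pow3) simp
  then show ?thesis
    by (simp add: power_mult_distrib mult.assoc)
qed

lemma summable_sigma3_series:
  fixes r :: real
  assumes "0 \<le> r" "3 * r < 1"
  shows "summable (\<lambda>n. real (sigma3 (Suc n)) * r ^ Suc n)"
proof (rule summable_comparison_test')
  have "summable (\<lambda>n. (3 * r) ^ n)"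
    using assms by (intro summable_geometric) simp
  then show "summable (\<lambda>n. 4 * (3 * r) ^ Suc n)"
    by (intro summable_mult) (simp only: summable_Suc_iff)
  show "norm (real (sigma3 (Suc n)) * r ^ Suc n) \<le> 4 * (3 * r) ^ Suc n" for n
    using assms sigma3_term_le_geometric[OF assms(1), of "Suc n"] by simp
qed

lemma sigma3_series_le:
  fixes r :: real
  assumes "0 \<le> r" "3 * r < 1"
  shows "(\<Sum>n. real (sigma3 (Suc n)) * r ^ Suc n) \<le> r + 9 * r^2 + 4 * (3 * r)^3 / (1 - 3 * r)"
proof -
  define f where "f n = real (sigma3 (Suc n)) * r ^ Suc n" for n
  have f: "summable f"
    unfolding f_def using assms by (rule summable_sigma3_series)
  have tail_geometric: "(\<lambda>n. 4 * (3 * r) ^ 3 * (3 * r) ^ n) sums (4 * (3 * r) ^ 3 / (1 - 3 * r))"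
  proof -
    have "(\<lambda>n. 4 * (3 * r) ^ 3 * (3 * r) ^ n) sums (4 * (3 * r) ^ 3 * (1 / (1 - 3 * r)))"
      using assms by (intro sums_mult geometric_sums) simp
    then show ?thesis by simp
  qed
  have "(\<Sum>n. f n) = f 0 + f 1 + (\<Sum>n. f (n + 2))"
    using suminf_split_initial_segment[OF f, of 2] by (simp add: eval_nat_numeral)
  also have "f 0 + f 1 = r + 9 * r^2"
    by (simp add: f_def sigma3_1 sigma3_2 flip: One_nat_def)
  also have "(\<Sum>n. f (n + 2)) \<le> (\<Sum>n. 4 * (3 * r) ^ 3 * (3 * r) ^ n)"
  proof (rule suminf_le)
    fix n
    have "Suc (n + 2) = n + 3" by simp
    then have "f (n + 2) \<le> 4 * (3 * r) ^ (n + 3)"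
      unfolding f_def by (metis sigma3_term_le_geometric[OF assms(1)])
    also have "\<dots> = 4 * (3 * r) ^ 3 * (3 * r) ^ n"
      by (simp add: power_add mult_ac)
    finally show "f (n + 2) \<le> 4 * (3 * r) ^ 3 * (3 * r) ^ n" .
  next
    show "summable (\<lambda>n. f (n + 2))"
      using f by (simp only: summable_iff_shift)
    show "summable (\<lambda>n. 4 * (3 * r) ^ 3 * (3 * r) ^ n)"
      using tail_geometric by (rule sums_summable)
  qed
  also have "\<dots> = 4 * (3 * r) ^ 3 / (1 - 3 * r)"
    using tail_geometric by (simp add: sums_iff)
  finally show ?thesis
    by (simp add: f_def)
qed

lemma norm_qnome: "norm (qnome \<tau>) = exp (- 2 * pi * Im \<tau>)"
  by (simp add: qnome_def norm_exp_eq_Re)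

lemma norm_E4_le_sigma3_series:
  assumes "3 * norm (qnome \<tau>) < 1"
  shows "norm (E4 \<tau>) \<le> 1 + 240 * (\<Sum>n. real (sigma3 (Suc n)) * norm (qnome \<tau>) ^ Suc n)"
proof -
  define a where "a n = of_nat (sigma3 (Suc n)) * qnome \<tau> ^ Suc n" for n
  have norm_a: "norm (a n) = real (sigma3 (Suc n)) * norm (qnome \<tau>) ^ Suc n" for n
    by (simp add: a_def norm_mult norm_power)
  have "E4 \<tau> = 1 + 240 * suminf a"
    unfolding E4_def a_def ..
  then have "norm (E4 \<tau>) \<le> 1 + 240 * norm (suminf a)"
    using norm_triangle_ineq[of 1 "240 * suminf a"] by (simp add: norm_mult)
  also have "norm (suminf a) \<le> (\<Sum>n. norm (a n))"
    using summable_sigma3_series[OF norm_ge_zero assms] norm_a by (intro summable_norm) simp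
  finally show ?thesis
    by (simp add: norm_a)
qed

definition E4_majorant :: "real \<Rightarrow> real" where
  "E4_majorant r = 1 + 240 * (r + 9 * r^2 + 4 * (3 * r)^3 / (1 - 3 * r))"

lemma norm_E4_le_majorant:
  assumes "3 * norm (qnome \<tau>) < 1"
  shows "norm (E4 \<tau>) \<le> E4_majorant (norm (qnome \<tau>))"
  using norm_E4_le_sigma3_series[OF assms] sigma3_series_le[OF norm_ge_zero assms]
  unfolding E4_majorant_def by simp

lemma E4_majorant_mono:
  assumes "0 \<le> r" "r \<le> u" "3 * u < 1"
  shows "E4_majorant r \<le> E4_majorant u"
proof -
  have "r^2 \<le> u^2" "(3 * r)^3 \<le> (3 * u)^3"
    using assms by (auto intro: power_mono)
  moreover from this(2) have "4 * (3 * r)^3 / (1 - 3 * r) \<le> 4 * (3 * u)^3 / (1 - 3 * u)"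
    using assms by (intro frac_le) auto
  ultimately show ?thesis
    unfolding E4_majorant_def using assms by (intro add_left_mono mult_left_mono add_mono) auto
qed

lemma norm_E4_less:
  assumes "N \<le> exp (2 * pi * Im \<tau>)" "3 < N" "E4_majorant (1 / N) < B"
  shows "norm (E4 \<tau>) < B"
proof -
  have "norm (qnome \<tau>) = inverse (exp (2 * pi * Im \<tau>))"
    by (simp add: norm_qnome flip: exp_minus)
  also have "\<dots> \<le> 1 / N"
    using assms by (simp add: divide_inverse le_imp_inverse_le)
  finally have r_le: "norm (qnome \<tau>) \<le> 1 / N" .
  have small: "3 * (1 / N) < 1"
    using assms by simp
  have "norm (E4 \<tau>) \<le> E4_majorant (norm (qnome \<tau>))"
    using r_le small by (intro norm_E4_le_majorant) linarith
  also have "\<dots> \<le> E4_majorant (1 / N)"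
    using r_le small by (intro E4_majorant_mono) auto
  also have "\<dots> < B"
    by (fact assms(3))
  finally show ?thesis .
qed

lemma exp_ge_Taylor_sum:
  fixes x :: real
  assumes "0 \<le> x"
  shows "(\<Sum>k<n. x ^ k / fact k) \<le> exp x"
proof -
  have exp_sums: "(\<lambda>k. x ^ k / fact k) sums exp x"
    using exp_converges[of x] by (simp add: divide_inverse mult.commute)
  have "(\<Sum>k<n. x ^ k / fact k) \<le> (\<Sum>k. x ^ k / fact k)"
    using assms exp_sums by (intro sum_le_suminf) (auto simp: sums_iff)
  with exp_sums show ?thesis by (simp add: sums_iff)
qed

lemma exp_2pi_065_ge: "59 \<le> exp (2 * pi * 0.65)"
proof -
  have "59 \<le> (\<Sum>k<14. 4.08 ^ k / fact k :: real)"
    by (simp add: lessThan_nat_numeral fact_numeral power_divide)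
  also have "\<dots> \<le> exp 4.08"
    by (rule exp_ge_Taylor_sum) simp
  also have "\<dots> \<le> exp (2 * pi * 0.65)"
    using pi_approx(1) by simp
  finally show ?thesis .
qed

lemma exp_2pi_075_ge: "111 \<le> exp (2 * pi * 0.75)"
proof -
  have "111 \<le> (\<Sum>k<15. 4.71 ^ k / fact k :: real)"
    by (simp add: lessThan_nat_numeral fact_numeral power_divide)
  also have "\<dots> \<le> exp 4.71"
    by (rule exp_ge_Taylor_sum) simp
  also have "\<dots> \<le> exp (2 * pi * 0.75)"
    using pi_approx(1) by simp
  finally show ?thesis .
qed

theorem lemma4p7:
  shows "(\<forall>x::real. -0.5 \<le> x \<and> x \<le> 0.5 \<longrightarrow>
            norm (E4 (Complex x 0.65)) < 5.9) \<and>
         (\<forall>x::real. -0.5 \<le> x \<and> x \<le> 0.5 \<longrightarrow>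
            norm (E4 (Complex x 0.75)) < 3.45)"
proof (intro conjI allI impI)
  fix x :: real
  show "norm (E4 (Complex x 0.65)) < 5.9"
    by (rule norm_E4_less[where N = 59])
      (use exp_2pi_065_ge in \<open>simp_all add: E4_majorant_def power_divide\<close>)
  show "norm (E4 (Complex x 0.75)) < 3.45"
    by (rule norm_E4_less[where N = 111])
      (use exp_2pi_075_ge in \<open>simp_all add: E4_majorant_def power_divide\<close>)
qed

end
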